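(* Consider the click-through auction setting below with $n=2$ bidders and arbitrary known values $v_1,v_2\ge 0$. For every information structure that is both calibrated and independent, its expected revenue is at most $\min\big(v_1\mathbb{E}[r_1],\,v_2\mathbb{E}[r_2]\big)$, which is the expected revenue of the no-disclosure information structure. In particular, no independent calibrated information structure (including full disclosure) yields strictly more revenue than no disclosure.
   Context: Setting. There are $n\ge 2$ bidders; bidder $i$ has a known value per click $v_i\ge 0$. A vector of click-through rates (CTRs) $r=(r_1,\dots,r_n)\in[0,1]^n$ is drawn from a prior distribution $G$ with finite support (probability mass function $g$). An information structure is a probability distribution $x$ with finite support on pairs $(r,s)\in[0,1]^n\times[0,1]^n$ whose $r$-marginal is $G$, i.e. $\sum_s x(r,s)=g(r)$ for all $r$; $s=(s_1,\dots,s_n)$ is the vector of signals (scores). Given $s$, the winner $i^*$ is a bidder maximizing $v_is_i$, ties broken uniformly at random; the winner's price per click is $p_{i^*}=\max_{j\neq i^*}v_js_j/s_{i^*}$ (revenue is taken to be $0$ if $s_{i^*}=0$), and the winner pays only upon a click, which occurs with probability $r_{i^*}$. The revenue of an information structure is $\mathrm{Rev}=\mathbb{E}[r_{i^*}p_{i^*}]$, the expectation taken over $(r,s)\sim x$ and tie-breaking. An information structure is calibrated if $\mathbb{E}[r_i\mid s_i=t]=t$ for every bidder $i$ and every $t$ with $\Pr[s_i=t]>0$. It is independent if $\mathbb{E}[r_i\mid s]=\mathbb{E}[r_i\mid s_i]$ for every $i$ and every $s$ in the support; otherwise it is correlated. Full disclosure is the structure with $s=r$ almost surely; no disclosure is the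 structure with $s_i=\mathbb{E}[r_i]$ almost surely for every $i$. *)

theory Defs
  imports "HOL-Probability.Probability"
begin

text \<open>Bidders are the elements of a finite index type 'n; vectors of CTRs / scores
  are functions 'n \<Rightarrow> real. An information structure is a finitely supported
  pmf on pairs (r, s).\<close>

type_synonym 'n vec = "'n \<Rightarrow> real"

definition in_unit_cube :: "'n vec \<Rightarrow> bool" where
  "in_unit_cube r \<longleftrightarrow> (\<forall>i. 0 \<le> r i \<and> r i \<le> 1)"

definition is_prior :: "'n vec pmf \<Rightarrow> bool" where
  "is_prior G \<longleftrightarrow> finite (set_pmf G) \<and> (\<forall>r\<in>set_pmf G. in_unit_cube r)"

definition info_structure :: "'n vec pmf \<Rightarrow> ('n vec \<times> 'n vec) pmf \<Rightarrow> bool" where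
  "info_structure G x \<longleftrightarrow> finite (set_pmf x) \<and>
     (\<forall>(r, s)\<in>set_pmf x. in_unit_cube r \<and> in_unit_cube s) \<and>
     map_pmf fst x = G"

definition cond_exp :: "'a pmf \<Rightarrow> ('a \<Rightarrow> real) \<Rightarrow> 'a set \<Rightarrow> real" where
  "cond_exp x f A = measure_pmf.expectation x (\<lambda>w. f w * indicator A w) / measure_pmf.prob x A"

definition calibrated :: "('n vec \<times> 'n vec) pmf \<Rightarrow> bool" where
  "calibrated x \<longleftrightarrow> (\<forall>i t. measure_pmf.prob x {(r, s). s i = t} > 0 \<longrightarrow>
       cond_exp x (\<lambda>(r, s). r i) {(r, s). s i = t} = t)"

definition independent_is :: "('n vec \<times> 'n vec) pmf \<Rightarrow> bool" where
  "independent_is x \<longleftrightarrow> (\<forall>i. \<forall>s0 \<in> snd ` set_pmf x.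
       cond_exp x (\<lambda>(r, s). r i) {(r, s). s = s0} =
       cond_exp x (\<lambda>(r, s). r i) {(r, s). s i = s0 i})"

text \<open>Auction outcome: winners are the maximizers of v_i s_i (ties uniformly at random),
  price per click = highest competing bid divided by own score (revenue 0 if score is 0).\<close>
definition winners :: "'n vec \<Rightarrow> 'n vec \<Rightarrow> 'n set" where
  "winners v s = {i. \<forall>j. v j * s j \<le> v i * s i}"

definition price :: "'n::finite vec \<Rightarrow> 'n vec \<Rightarrow> 'n \<Rightarrow> real" where
  "price v s i = (if s i = 0 then 0 else Max ((\<lambda>j. v j * s j) ` (UNIV - {i})) / s i)"

definition outcome_revenue :: "'n::finite vec \<Rightarrow> 'n vec \<Rightarrow> 'n vec \<Rightarrow> real" where
  "outcome_revenue v r s =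
     (\<Sum>i\<in>winners v s. r i * price v s i) / real (card (winners v s))"

definition revenue :: "'n::finite vec \<Rightarrow> ('n vec \<times> 'n vec) pmf \<Rightarrow> real" where
  "revenue v x = measure_pmf.expectation x (\<lambda>(r, s). outcome_revenue v r s)"

definition full_disclosure :: "'n vec pmf \<Rightarrow> ('n vec \<times> 'n vec) pmf" where
  "full_disclosure G = map_pmf (\<lambda>r. (r, r)) G"

definition no_disclosure :: "'n vec pmf \<Rightarrow> ('n vec \<times> 'n vec) pmf" where
  "no_disclosure G = map_pmf (\<lambda>r. (r, \<lambda>i. measure_pmf.expectation G (\<lambda>r'. r' i))) G"

end

theory Submission
  imports Defs
begin

text \<open>Calibration and independence together say that the expected CTR of bidder \<open>i\<close>
  given the whole score profile \<open>s\<close> is \<open>s i\<close>. Since the price paid per click depends on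
  \<open>s\<close> only, the revenue is then the same as if every CTR equalled its score, i.e. the
  expected revenue of the auction run on the bids \<open>v i * s i\<close> with true CTRs \<open>s\<close>. With two
  bidders that revenue is the lower bid \<open>min (v\<^sub>1 s\<^sub>1, v\<^sub>2 s\<^sub>2)\<close>, whose expectation is at most
  \<open>v\<^sub>j \<bbbE>[s\<^sub>j] = v\<^sub>j \<bbbE>[r\<^sub>j]\<close> for each \<open>j\<close>. Without disclosure the scores are the constants
  \<open>\<bbbE>[r\<^sub>i]\<close> and the revenue is exactly this minimum.\<close>

lemma expectation_partition_snd:
  fixes x :: "('a \<times> 'b) pmf" and F :: "'a \<times> 'b \<Rightarrow> real"
  assumes fin: "finite (set_pmf x)"
  shows "measure_pmf.expectation x F =
    (\<Sum>s0\<in>snd ` set_pmf x. measure_pmf.expectation x (\<lambda>p. F p * indicator {(r, s). s = s0} p))"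
proof -
  have "measure_pmf.expectation x F =
      measure_pmf.expectation x (\<lambda>p. \<Sum>s0\<in>snd ` set_pmf x. F p * indicator {(r, s). s = s0} p)"
  proof (rule integral_cong_AE)
    show "AE p in measure_pmf x. F p = (\<Sum>s0\<in>snd ` set_pmf x. F p * indicator {(r, s). s = s0} p)"
    proof (rule AE_pmfI)
      fix p assume "p \<in> set_pmf x"
      then show "F p = (\<Sum>s0\<in>snd ` set_pmf x. F p * indicator {(r, s). s = s0} p)"
        using fin by (simp add: indicator_def case_prod_beta sum.delta)
    qed
  qed simp_all
  also have "\<dots> = (\<Sum>s0\<in>snd ` set_pmf x. measure_pmf.expectation x (\<lambda>p. F p * indicator {(r, s). s = s0} p))"
    by (rule Bochner_Integration.integral_sum) (rule integrable_measure_pmf_finite[OF fin])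
  finally show ?thesis .
qed

lemma expectation_mult_cond_exp_snd:
  fixes x :: "('a \<times> 'b) pmf" and f :: "'a \<Rightarrow> real" and g h :: "'b \<Rightarrow> real"
  assumes fin: "finite (set_pmf x)"
    and ce: "\<And>s0. s0 \<in> snd ` set_pmf x \<Longrightarrow> cond_exp x (\<lambda>(r, s). f r) {(r, s). s = s0} = h s0"
  shows "measure_pmf.expectation x (\<lambda>(r, s). f r * g s) = measure_pmf.expectation x (\<lambda>(r, s). h s * g s)"
proof -
  have "measure_pmf.expectation x (\<lambda>p. (case p of (r, s) \<Rightarrow> f r * g s) * indicator {(r, s). s = s0} p)
      = measure_pmf.expectation x (\<lambda>p. (case p of (r, s) \<Rightarrow> h s * g s) * indicator {(r, s). s = s0} p)"
    if s0: "s0 \<in> snd ` set_pmf x" for s0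
  proof -
    let ?A = "{(r, s). s = s0}"
    obtain r0 where "(r0, s0) \<in> set_pmf x" using s0 by force
    then have "measure_pmf.prob x ?A > 0" by (rule measure_pmf_posI) simp
    then have f_on_A: "measure_pmf.expectation x (\<lambda>p. (case p of (r, s) \<Rightarrow> f r) * indicator ?A p)
        = h s0 * measure_pmf.prob x ?A"
      using ce[OF s0] by (simp add: cond_exp_def field_simps)
    have "measure_pmf.expectation x (\<lambda>p. (case p of (r, s) \<Rightarrow> f r * g s) * indicator ?A p)
        = measure_pmf.expectation x (\<lambda>p. g s0 * ((case p of (r, s) \<Rightarrow> f r) * indicator ?A p))"
      by (intro Bochner_Integration.integral_cong) (auto simp: indicator_def)
    also have "\<dots> = g s0 * h s0 * measure_pmf.prob x ?A"
      by (simp add: f_on_A)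
    also have "\<dots> = measure_pmf.expectation x (\<lambda>p. h s0 * g s0 * indicator ?A p)"
      by simp
    also have "\<dots> = measure_pmf.expectation x (\<lambda>p. (case p of (r, s) \<Rightarrow> h s * g s) * indicator ?A p)"
      by (intro Bochner_Integration.integral_cong) (auto simp: indicator_def)
    finally show ?thesis .
  qed
  then show ?thesis
    by (simp only: expectation_partition_snd[OF fin, of "\<lambda>(r, s). f r * g s"]
        expectation_partition_snd[OF fin, of "\<lambda>(r, s). h s * g s"] cong: sum.cong)
qed

lemma cond_exp_ctr_given_signals:
  assumes cal: "calibrated x" and ind: "independent_is x" and s0: "s0 \<in> snd ` set_pmf x"
  shows "cond_exp x (\<lambda>(r, s). r i) {(r, s). s = s0} = s0 i"
proof -
  obtain r0 where "(r0, s0) \<in> set_pmf x" using s0 by force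
  then have "measure_pmf.prob x {(r, s). s i = s0 i} > 0" by (rule measure_pmf_posI) simp
  then have "cond_exp x (\<lambda>(r, s). r i) {(r, s). s i = s0 i} = s0 i"
    using cal unfolding calibrated_def by blast
  moreover have "cond_exp x (\<lambda>(r, s). r i) {(r, s). s = s0} = cond_exp x (\<lambda>(r, s). r i) {(r, s). s i = s0 i}"
    using ind s0 unfolding independent_is_def by blast
  ultimately show ?thesis by simp
qed

lemma expectation_ctr_mult_signal_fun:
  assumes fin: "finite (set_pmf x)" and cal: "calibrated x" and ind: "independent_is x"
  shows "measure_pmf.expectation x (\<lambda>(r, s). r i * g s) = measure_pmf.expectation x (\<lambda>(r, s). s i * g s)"
  using expectation_mult_cond_exp_snd[OF fin cond_exp_ctr_given_signals[OF cal ind]] by simp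

definition price_share :: "'n::finite vec \<Rightarrow> 'n vec \<Rightarrow> 'n \<Rightarrow> real" where
  "price_share v s i = (if i \<in> winners v s then price v s i / real (card (winners v s)) else 0)"

lemma outcome_revenue_eq_sum_price_share:
  "outcome_revenue v r s = (\<Sum>i\<in>UNIV. r i * price_share v s i)"
  unfolding outcome_revenue_def price_share_def
  by (simp add: sum_divide_distrib if_distrib[of "times _"] sum.If_cases Int_absorb1)

lemma revenue_calibrated_independent:
  fixes v :: "'n::finite vec"
  assumes fin: "finite (set_pmf x)" and cal: "calibrated x" and ind: "independent_is x"
  shows "revenue v x = measure_pmf.expectation x (\<lambda>(r, s). outcome_revenue v s s)"
proof -
  have "revenue v x = (\<Sum>i\<in>UNIV. measure_pmf.expectation x (\<lambda>(r, s). r i * price_share v s i))"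
    unfolding revenue_def outcome_revenue_eq_sum_price_share case_prod_beta
    by (rule Bochner_Integration.integral_sum) (rule integrable_measure_pmf_finite[OF fin])
  also have "\<dots> = (\<Sum>i\<in>UNIV. measure_pmf.expectation x (\<lambda>(r, s). s i * price_share v s i))"
    using expectation_ctr_mult_signal_fun[OF fin cal ind] by simp
  also have "\<dots> = measure_pmf.expectation x (\<lambda>(r, s). outcome_revenue v s s)"
    unfolding outcome_revenue_eq_sum_price_share case_prod_beta
    by (rule Bochner_Integration.integral_sum[symmetric]) (rule integrable_measure_pmf_finite[OF fin])
  finally show ?thesis .
qed

lemma winners_nonempty: "winners v (s :: 'n::finite vec) \<noteq> {}"
proof -
  let ?bids = "range (\<lambda>j. v j * s j)"
  have "Max ?bids \<in> ?bids" by (rule Max_in) simp_all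
  then obtain i where i: "Max ?bids = v i * s i" by blast
  have "i \<in> winners v s" unfolding winners_def
  proof (intro CollectI allI)
    fix j
    have "v j * s j \<le> Max ?bids" by (rule Max_ge) simp_all
    with i show "v j * s j \<le> v i * s i" by simp
  qed
  then show ?thesis by blast
qed

lemma winner_payment_two_bidders:
  fixes v s :: "'n::finite vec"
  assumes two: "CARD('n) = 2" and v: "\<forall>j. 0 \<le> v j" and s: "\<forall>j. 0 \<le> s j"
    and win: "i \<in> winners v s"
  shows "s i * price v s i = Min (range (\<lambda>j. v j * s j))"
proof -
  have "card (UNIV - {i}) = 1" using two by simp
  then obtain k where others: "UNIV - {i} = {k}" by (rule card_1_singletonE)
  then have univ: "UNIV = {i, k}" by blast
  have "v k * s k \<le> v i * s i" using win by (simp add: winners_def)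
  then have min_eq: "Min (range (\<lambda>j. v j * s j)) = v k * s k"
    by (simp add: univ min_def)
  show ?thesis
  proof (cases "s i = 0")
    case True
    with \<open>v k * s k \<le> v i * s i\<close> v s have "v k * s k = 0"
      by (metis mult_zero_right order_antisym zero_le_mult_iff)
    with True show ?thesis by (simp add: price_def min_eq)
  qed (simp add: price_def others min_eq)
qed

lemma outcome_revenue_diagonal_two_bidders:
  fixes v s :: "'n::finite vec"
  assumes two: "CARD('n) = 2" and v: "\<forall>j. 0 \<le> v j" and s: "\<forall>j. 0 \<le> s j"
  shows "outcome_revenue v s s = Min (range (\<lambda>j. v j * s j))"
proof -
  have "outcome_revenue v s s = (\<Sum>i\<in>winners v s. Min (range (\<lambda>j. v j * s j))) / real (card (winners v s))"
    unfolding outcome_revenue_def using winner_payment_two_bidders[OF two v s] by simp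
  also have "\<dots> = Min (range (\<lambda>j. v j * s j))"
    using winners_nonempty[of v s] by simp
  finally show ?thesis .
qed

lemma revenue_no_disclosure:
  fixes v :: "'n::finite vec"
  assumes fin: "finite (set_pmf G)" and m: "m = (\<lambda>i. measure_pmf.expectation G (\<lambda>r. r i))"
  shows "revenue v (no_disclosure G) = outcome_revenue v m m"
proof -
  have "revenue v (no_disclosure G) = measure_pmf.expectation G (\<lambda>r. \<Sum>i\<in>UNIV. r i * price_share v m i)"
    by (simp add: revenue_def no_disclosure_def m outcome_revenue_eq_sum_price_share)
  also have "\<dots> = (\<Sum>i\<in>UNIV. m i * price_share v m i)"
    by (subst Bochner_Integration.integral_sum) (simp_all add: m integrable_measure_pmf_finite[OF fin])
  also have "\<dots> = outcome_revenue v m m"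
    by (simp add: outcome_revenue_eq_sum_price_share)
  finally show ?thesis .
qed

lemma expectation_signal_eq_prior_mean:
  assumes info: "info_structure G x" and cal: "calibrated x" and ind: "independent_is x"
  shows "measure_pmf.expectation x (\<lambda>(r, s). s i) = measure_pmf.expectation G (\<lambda>r. r i)"
proof -
  have fin: "finite (set_pmf x)" and marginal: "map_pmf fst x = G"
    using info by (auto simp: info_structure_def)
  have "measure_pmf.expectation x (\<lambda>(r, s). s i) = measure_pmf.expectation x (\<lambda>(r, s). r i)"
    using expectation_ctr_mult_signal_fun[OF fin cal ind, of i "\<lambda>_. 1"] by simp
  also have "\<dots> = measure_pmf.expectation (map_pmf fst x) (\<lambda>r. r i)"
    by (simp add: split_beta')
  finally show ?thesis by (simp add: marginal)
qed

lemma revenue_two_bidders_eq_expectation_min_bid: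
  fixes v :: "'n::finite vec"
  assumes two: "CARD('n) = 2" and v: "\<forall>j. 0 \<le> v j"
    and info: "info_structure G x" and cal: "calibrated x" and ind: "independent_is x"
  shows "revenue v x = measure_pmf.expectation x (\<lambda>(r, s). Min (range (\<lambda>j. v j * s j)))"
proof -
  have fin: "finite (set_pmf x)" using info by (simp add: info_structure_def)
  have "revenue v x = measure_pmf.expectation x (\<lambda>(r, s). outcome_revenue v s s)"
    by (rule revenue_calibrated_independent[OF fin cal ind])
  also have "\<dots> = measure_pmf.expectation x (\<lambda>(r, s). Min (range (\<lambda>j. v j * s j)))"
  proof (intro integral_cong_AE AE_pmfI)
    fix p assume "p \<in> set_pmf x"
    then have "\<forall>j. 0 \<le> snd p j" using info by (auto simp: info_structure_def in_unit_cube_def)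
    then show "(case p of (r, s) \<Rightarrow> outcome_revenue v s s) = (case p of (r, s) \<Rightarrow> Min (range (\<lambda>j. v j * s j)))"
      using outcome_revenue_diagonal_two_bidders[OF two v] by (simp add: case_prod_beta)
  qed simp_all
  finally show ?thesis .
qed

theorem mainTheorem1:
  fixes v :: "'n::finite \<Rightarrow> real"
    and G :: "('n \<Rightarrow> real) pmf"
    and x :: "(('n \<Rightarrow> real) \<times> ('n \<Rightarrow> real)) pmf"
  assumes two_bidders: "CARD('n) = 2"
    and v_nonneg: "\<forall>i. 0 \<le> v i"
    and prior: "is_prior G"
    and info: "info_structure G x"
    and cal: "calibrated x"
    and ind: "independent_is x"
  shows "revenue v x \<le> Min (range (\<lambda>i. v i * measure_pmf.expectation G (\<lambda>r. r i)))
       \<and> revenue v (no_disclosure G) = Min (range (\<lambda>i. v i * measure_pmf.expectation G (\<lambda>r. r i)))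
       \<and> revenue v x \<le> revenue v (no_disclosure G)"
proof -
  define m where "m = (\<lambda>i. measure_pmf.expectation G (\<lambda>r. r i))"
  have fin: "finite (set_pmf x)" using info by (simp add: info_structure_def)
  have "revenue v x \<le> v i * m i" for i
  proof -
    have "revenue v x \<le> measure_pmf.expectation x (\<lambda>(r, s). v i * s i)"
      unfolding revenue_two_bidders_eq_expectation_min_bid[OF two_bidders v_nonneg info cal ind]
      by (intro integral_mono integrable_measure_pmf_finite[OF fin]) (auto intro: Min_le)
    also have "\<dots> = v i * m i"
      using expectation_signal_eq_prior_mean[OF info cal ind, of i] by (simp add: split_beta' m_def)
    finally show ?thesis .
  qed
  then have bound: "revenue v x \<le> Min (range (\<lambda>i. v i * m i))"
    by (intro Min.boundedI) auto
  have "\<forall>i. 0 \<le> m i"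
    using prior by (auto simp: m_def is_prior_def in_unit_cube_def intro!: integral_nonneg_AE AE_pmfI)
  then have no_disclosure: "revenue v (no_disclosure G) = Min (range (\<lambda>i. v i * m i))"
    using prior revenue_no_disclosure[OF _ m_def] outcome_revenue_diagonal_two_bidders[OF two_bidders v_nonneg]
    by (simp add: is_prior_def)
  show ?thesis using bound no_disclosure by (simp add: m_def)
qed

end
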